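(* Let $G$ be a connected graph of order $n$ with exactly $k$ cut edges. If $SO(G)$ is maximum among all connected graphs of order $n$ with exactly $k$ cut edges, then every cut edge of $G$ is pendent (has an end vertex of degree one).
   Context: For a graph $G$, $d_G(w)$ denotes the degree of vertex $w$, and the Sombor index is $SO(G)=\sum_{ab\in E(G)}\sqrt{d_G(a)^2+d_G(b)^2}$. A cut edge is an edge whose deletion disconnects the graph. *)

theory Defs
  imports "HOL-Analysis.Analysis"
begin

definition simple_graph :: "'a set \<Rightarrow> 'a set set \<Rightarrow> bool" where
  "simple_graph V E \<longleftrightarrow> finite V \<and> (\<forall>e\<in>E. e \<subseteq> V \<and> card e = 2)"

definition degree :: "'a set set \<Rightarrow> 'a \<Rightarrow> nat" where
  "degree E v = card {e \<in> E. v \<in> e}"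

definition adj :: "'a set set \<Rightarrow> 'a \<Rightarrow> 'a \<Rightarrow> bool" where
  "adj E u v \<longleftrightarrow> {u, v} \<in> E"

definition connected_graph :: "'a set \<Rightarrow> 'a set set \<Rightarrow> bool" where
  "connected_graph V E \<longleftrightarrow> V \<noteq> {} \<and> (\<forall>u\<in>V. \<forall>v\<in>V. (adj E)\<^sup>*\<^sup>* u v)"

definition cut_edge :: "'a set \<Rightarrow> 'a set set \<Rightarrow> 'a set \<Rightarrow> bool" where
  "cut_edge V E e \<longleftrightarrow> e \<in> E \<and> \<not> connected_graph V (E - {e})"

definition cut_edges :: "'a set \<Rightarrow> 'a set set \<Rightarrow> 'a set set" where
  "cut_edges V E = {e \<in> E. cut_edge V E e}"

definition sombor :: "'a set set \<Rightarrow> real" where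
  "sombor E = (\<Sum>e\<in>E. (THE s. \<exists>a b. e = {a, b} \<and> a \<noteq> b \<and>
      s = sqrt (real (degree E a)^2 + real (degree E b)^2)))"

definition pendent_edge :: "'a set set \<Rightarrow> 'a set \<Rightarrow> bool" where
  "pendent_edge E e \<longleftrightarrow> (\<exists>v\<in>e. degree E v = 1)"

end

theory Submission
  imports Defs
begin

text \<open>
  Let uv be a cut edge whose ends both have degrees a, b \<ge> 2, and replace every edge vy
  (y different from u) by uy. Because uv is a cut edge, none of the edges uy existed before, so
  no edge is lost; the new graph is connected, its cut edges correspond to the old ones, v becomes
  pendent and u acquires degree a + b - 1. Every other edge keeps ends of at least the old
  degrees, so its Sombor term does not decrease, while the term of uv grows from
  sqrt (a^2 + b^2) to sqrt ((a + b - 1)^2 + 1), the squares differing by 2 (a - 1) (b - 1) > 0.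
  Hence the Sombor index strictly increases, contradicting maximality.
\<close>

lemma adj_commute: "adj F x y = adj F y x"
  by (simp add: adj_def insert_commute)

lemma reachable_sym: "(adj F)\<^sup>*\<^sup>* x y \<Longrightarrow> (adj F)\<^sup>*\<^sup>* y x"
  by (metis adj_commute symp_rtranclp sympD sympI)

lemma reachable_map:
  assumes "\<And>x y. adj F x y \<Longrightarrow> (adj F')\<^sup>*\<^sup>* (h x) (h y)"
    and "(adj F)\<^sup>*\<^sup>* x y"
  shows "(adj F')\<^sup>*\<^sup>* (h x) (h y)"
  using assms(2)
proof (induction rule: rtranclp_induct)
  case (step y z)
  then show ?case using assms(1) rtranclp_trans by metis
qed simp

lemma cut_edge_iff_not_reachable:
  assumes "simple_graph V E" "connected_graph V E" "{a, b} \<in> E"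
  shows "cut_edge V E {a, b} \<longleftrightarrow> \<not> (adj (E - {{a, b}}))\<^sup>*\<^sup>* a b"
proof
  assume "cut_edge V E {a, b}"
  show "\<not> (adj (E - {{a, b}}))\<^sup>*\<^sup>* a b"
  proof
    assume ab: "(adj (E - {{a, b}}))\<^sup>*\<^sup>* a b"
    have edge_reachable: "(adj (E - {{a, b}}))\<^sup>*\<^sup>* x y" if "adj E x y" for x y
    proof (cases "{x, y} = {a, b}")
      case True
      then show ?thesis using ab reachable_sym[OF ab] by (auto simp: doubleton_eq_iff)
    next
      case False
      then show ?thesis using that by (intro r_into_rtranclp) (simp add: adj_def)
    qed
    have "(adj (E - {{a, b}}))\<^sup>*\<^sup>* x y" if "x \<in> V" "y \<in> V" for x y
      using reachable_map[where h = id, OF edge_reachable] assms(2) that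
      by (simp add: connected_graph_def)
    then show False
      using \<open>cut_edge V E {a, b}\<close> assms(2) by (simp add: cut_edge_def connected_graph_def)
  qed
next
  assume "\<not> (adj (E - {{a, b}}))\<^sup>*\<^sup>* a b"
  moreover have "a \<in> V" "b \<in> V" using assms(1,3) by (auto simp: simple_graph_def)
  ultimately show "cut_edge V E {a, b}"
    using assms(3) by (auto simp: cut_edge_def connected_graph_def)
qed

lemma card_2_containing: "card g = 2 \<Longrightarrow> x \<in> g \<Longrightarrow> \<exists>y. g = {x, y} \<and> y \<noteq> x"
  by (auto simp: card_2_iff insert_commute)

lemma simple_graph_finite_edges: "simple_graph V E \<Longrightarrow> finite E"
  unfolding simple_graph_def by (meson Pow_iff finite_Pow_iff finite_subset subsetI)

lemma degree_ge_1: "finite E \<Longrightarrow> g \<in> E \<Longrightarrow> x \<in> g \<Longrightarrow> degree E x \<ge> 1"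
  unfolding degree_def by (auto simp: Suc_le_eq card_gt_0_iff)

definition edge_sombor :: "'a set set \<Rightarrow> 'a set \<Rightarrow> real" where
  "edge_sombor E e = (THE s. \<exists>a b. e = {a, b} \<and> a \<noteq> b \<and>
      s = sqrt (real (degree E a)^2 + real (degree E b)^2))"

lemma sombor_eq_sum_edge_sombor: "sombor E = (\<Sum>e\<in>E. edge_sombor E e)"
  unfolding sombor_def edge_sombor_def ..

lemma edge_sombor_doubleton:
  assumes "a \<noteq> b"
  shows "edge_sombor E {a, b} = sqrt (real (degree E a)^2 + real (degree E b)^2)"
  unfolding edge_sombor_def
proof (rule the_equality)
  fix s assume "\<exists>x y. {a, b} = {x, y} \<and> x \<noteq> y \<and> s = sqrt (real (degree E x)^2 + real (degree E y)^2)"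
  then show "s = sqrt (real (degree E a)^2 + real (degree E b)^2)"
    by (auto simp: doubleton_eq_iff add.commute)
qed (use assms in blast)

lemma sum_squares_lt_merged:
  fixes a b :: real
  assumes "a > 1" "b > 1"
  shows "a^2 + b^2 < (a + b - 1)^2 + 1"
proof -
  have "(a + b - 1)^2 + 1 - (a^2 + b^2) = 2 * ((a - 1) * (b - 1))"
    by (simp add: power2_eq_square algebra_simps)
  moreover have "(a - 1) * (b - 1) > 0" using assms by simp
  ultimately show ?thesis by linarith
qed

section \<open>Moving the edges at one end of a cut edge to the other end\<close>

locale cut_edge_shift =
  fixes V :: "'a set" and E :: "'a set set" and u v :: 'a
  assumes simple: "simple_graph V E"
    and connected: "connected_graph V E"
    and cut: "cut_edge V E {u, v}"
begin

lemma uv_edge: "{u, v} \<in> E"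
  using cut by (simp add: cut_edge_def)

lemma edge_subset_card: "g \<in> E \<Longrightarrow> g \<subseteq> V \<and> card g = 2"
  using simple by (simp add: simple_graph_def)

lemma u_ne_v: "u \<noteq> v"
  using edge_subset_card[OF uv_edge] by auto

lemma finite_edges: "finite E"
  using simple by (rule simple_graph_finite_edges)

lemma edge_containing_u_v: "g \<in> E \<Longrightarrow> u \<in> g \<Longrightarrow> v \<in> g \<Longrightarrow> g = {u, v}"
  using card_2_containing edge_subset_card u_ne_v by fastforce

lemma not_reachable_u_v: "\<not> (adj (E - {{u, v}}))\<^sup>*\<^sup>* u v"
  using cut cut_edge_iff_not_reachable[OF simple connected uv_edge] by blast

definition merge :: "'a \<Rightarrow> 'a" where
  "merge x = (if x = v then u else x)"

definition shift :: "'a set \<Rightarrow> 'a set" where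
  "shift g = (if g = {u, v} then g else merge ` g)"

definition shifted :: "'a set set" where
  "shifted = shift ` E"

lemma merge_ne_v: "merge x \<noteq> v"
  using u_ne_v by (simp add: merge_def)

lemma merge_eq_iff: "merge x = merge y \<longleftrightarrow> x = y \<or> {x, y} = {u, v}"
  by (auto simp: merge_def doubleton_eq_iff)

lemma shift_doubleton: "{x, y} \<noteq> {u, v} \<Longrightarrow> shift {x, y} = {merge x, merge y}"
  by (simp add: shift_def)

lemma shift_uv: "shift {u, v} = {u, v}"
  by (simp add: shift_def)

lemma uv_shifted: "{u, v} \<in> shifted"
  using uv_edge shift_uv unfolding shifted_def by force

text \<open>A second path from u to v would survive the deletion of the cut edge.\<close>
lemma reattached_edge_not_in_E:
  assumes "{v, y} \<in> E" "y \<noteq> u"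
  shows "{u, y} \<notin> E"
proof
  assume "{u, y} \<in> E"
  moreover have "{u, y} \<noteq> {u, v}" "{y, v} \<noteq> {u, v}" "{y, v} \<in> E"
    using assms edge_subset_card[OF assms(1)] by (auto simp: doubleton_eq_iff insert_commute)
  ultimately have "adj (E - {{u, v}}) u y" "adj (E - {{u, v}}) y v"
    by (simp_all add: adj_def)
  then show False
    using not_reachable_u_v by (meson r_into_rtranclp rtranclp.rtrancl_into_rtrancl)
qed

lemma shift_eq_self:
  assumes "v \<notin> g"
  shows "shift g = g"
proof -
  have "merge x = x" if "x \<in> g" for x
    using assms that by (auto simp: merge_def)
  then show ?thesis
    by (simp add: shift_def)
qed

lemma shift_eq_self_if_u: "g \<in> E \<Longrightarrow> u \<in> g \<Longrightarrow> shift g = g"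
  using edge_containing_u_v shift_uv shift_eq_self by blast

lemma shift_in_E_iff:
  assumes "g \<in> E"
  shows "shift g \<in> E \<longleftrightarrow> shift g = g"
proof
  assume "shift g \<in> E"
  show "shift g = g"
  proof (rule ccontr)
    assume "shift g \<noteq> g"
    then have "g \<noteq> {u, v}" "v \<in> g" "u \<notin> g"
      using shift_uv shift_eq_self shift_eq_self_if_u[OF assms] by metis+
    obtain y where y: "g = {v, y}" "y \<noteq> v"
      using card_2_containing[of g v] edge_subset_card[OF assms] \<open>v \<in> g\<close> by auto
    moreover have "merge v = u" "merge y = y"
      using y(2) by (simp_all add: merge_def)
    ultimately have "shift g = {u, y}" "y \<noteq> u"
      using \<open>g \<noteq> {u, v}\<close> \<open>u \<notin> g\<close> shift_doubleton by auto
    then show False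
      using reattached_edge_not_in_E \<open>shift g \<in> E\<close> assms y(1) by simp
  qed
qed (use assms in simp)

lemma inj_on_shift: "inj_on shift E"
proof (rule inj_onI)
  fix g h assume "g \<in> E" "h \<in> E" and eq: "shift g = shift h"
  show "g = h"
  proof (cases "shift g \<in> E")
    case True
    then show ?thesis
      using eq shift_in_E_iff \<open>g \<in> E\<close> \<open>h \<in> E\<close> by metis
  next
    case False
    then have "u \<notin> g" "u \<notin> h"
      using eq shift_eq_self_if_u \<open>g \<in> E\<close> \<open>h \<in> E\<close> by auto
    then have "g \<noteq> {u, v}" "h \<noteq> {u, v}"
      by auto
    then have "merge ` g = merge ` h"
      using eq by (simp add: shift_def)
    moreover have "inj_on merge (- {u})"
      by (auto simp: inj_on_def merge_def)
    ultimately show ?thesis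
      using \<open>u \<notin> g\<close> \<open>u \<notin> h\<close> inj_on_image_eq_iff by (metis subset_Compl_singleton)
  qed
qed

lemma merge_mem_V: "x \<in> V \<Longrightarrow> merge x \<in> V"
  using edge_subset_card[OF uv_edge] by (simp add: merge_def)

lemma shifted_edge_subset_card:
  assumes "h \<in> shifted"
  shows "h \<subseteq> V \<and> card h = 2"
proof -
  obtain g where g: "g \<in> E" "h = shift g"
    using assms by (auto simp: shifted_def)
  show ?thesis
  proof (cases "g = {u, v}")
    case True
    then show ?thesis using g edge_subset_card[OF g(1)] shift_uv by simp
  next
    case False
    obtain a b where ab: "g = {a, b}" "a \<noteq> b"
      using edge_subset_card[OF g(1)] unfolding card_2_iff by blast
    then have "h = {merge a, merge b}" "merge a \<noteq> merge b"
      using g False shift_doubleton merge_eq_iff by simp_all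
    moreover have "merge a \<in> V" "merge b \<in> V"
      using edge_subset_card[OF g(1)] ab merge_mem_V by simp_all
    ultimately show ?thesis by simp
  qed
qed

lemma simple_shifted: "simple_graph V shifted"
  using simple shifted_edge_subset_card by (simp add: simple_graph_def)

lemma mem_shift_iff_other: "x \<noteq> u \<Longrightarrow> x \<noteq> v \<Longrightarrow> x \<in> shift g \<longleftrightarrow> x \<in> g"
  by (auto simp: shift_def merge_def image_iff)

lemma u_mem_shift_iff: "u \<in> shift g \<longleftrightarrow> u \<in> g \<or> v \<in> g"
  by (auto simp: shift_def merge_def image_iff)

lemma v_mem_shift_iff: "v \<in> shift g \<longleftrightarrow> g = {u, v}"
proof -
  have "v \<notin> merge ` g"
    using merge_ne_v by (metis imageE)
  then show ?thesis
    by (auto simp: shift_def)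
qed

lemma degree_shifted: "degree shifted x = card {g \<in> E. x \<in> shift g}"
proof -
  have "{h \<in> shifted. x \<in> h} = shift ` {g \<in> E. x \<in> shift g}"
    by (auto simp: shifted_def)
  moreover have "inj_on shift {g \<in> E. x \<in> shift g}"
    by (rule inj_on_subset[OF inj_on_shift]) auto
  ultimately show ?thesis
    by (simp add: degree_def card_image)
qed

lemma degree_shifted_other: "x \<noteq> u \<Longrightarrow> x \<noteq> v \<Longrightarrow> degree shifted x = degree E x"
  unfolding degree_shifted by (simp add: mem_shift_iff_other degree_def)

lemma degree_shifted_v: "degree shifted v = 1"
proof -
  have "{g \<in> E. v \<in> shift g} = {{u, v}}"
    using uv_edge v_mem_shift_iff by auto
  then show ?thesis by (simp add: degree_shifted)
qed

lemma degree_shifted_u: "degree shifted u = degree E u + degree E v - 1"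
proof -
  let ?U = "{g \<in> E. u \<in> g}" and ?W = "{g \<in> E. v \<in> g}"
  have "{g \<in> E. u \<in> shift g} = ?U \<union> ?W"
    using u_mem_shift_iff by auto
  then have "degree shifted u = card (?U \<union> ?W)"
    by (simp only: degree_shifted)
  moreover have "?U \<inter> ?W = {{u, v}}"
    using uv_edge by (auto dest: edge_containing_u_v)
  then have "card (?U \<inter> ?W) = 1"
    by simp
  moreover have "card ?U + card ?W = card (?U \<union> ?W) + card (?U \<inter> ?W)"
    using finite_edges by (intro card_Un_Int) simp_all
  ultimately show ?thesis
    unfolding degree_def by linarith
qed

lemma degree_le_shifted_merge: "degree E x \<le> degree shifted (merge x)"
proof -
  have "degree E u \<ge> 1" "degree E v \<ge> 1"
    using degree_ge_1[OF finite_edges uv_edge] by simp_all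
  show ?thesis
  proof (cases "x = u \<or> x = v")
    case True
    then show ?thesis
      using degree_shifted_u \<open>degree E u \<ge> 1\<close> \<open>degree E v \<ge> 1\<close>
      by (auto simp: merge_def)
  next
    case False
    then show ?thesis
      using degree_shifted_other by (simp add: merge_def)
  qed
qed

lemma reachable_merge:
  assumes "{u, v} \<in> F"
  shows "(adj F)\<^sup>*\<^sup>* z (merge z)"
proof (cases "z = v")
  case True
  have "adj F v u"
    using assms by (simp add: adj_def insert_commute)
  then show ?thesis
    using True by (simp add: merge_def)
qed (simp add: merge_def)

lemma reachable_shifted:
  assumes "D \<subseteq> E" "(adj (E - D))\<^sup>*\<^sup>* x y"
  shows "(adj (shifted - shift ` D))\<^sup>*\<^sup>* (merge x) (merge y)"
proof (rule reachable_map[OF _ assms(2)])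
  fix a b assume ab: "adj (E - D) a b"
  show "(adj (shifted - shift ` D))\<^sup>*\<^sup>* (merge a) (merge b)"
  proof (cases "{a, b} = {u, v}")
    case True
    then have "merge a = merge b"
      using merge_eq_iff by blast
    then show ?thesis by simp
  next
    case False
    have "{a, b} \<in> E" "{a, b} \<notin> D"
      using ab by (simp_all add: adj_def)
    then have "shift {a, b} \<in> shifted - shift ` D"
      using assms(1) inj_on_shift by (auto simp: shifted_def inj_on_image_mem_iff)
    then show ?thesis
      using False shift_doubleton by (intro r_into_rtranclp) (simp add: adj_def)
  qed
qed

lemma reachable_unshifted:
  assumes "g0 \<in> E" "g0 \<noteq> {u, v}" "(adj (shifted - {shift g0}))\<^sup>*\<^sup>* p q"
  shows "(adj (E - {g0}))\<^sup>*\<^sup>* p q"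
proof -
  have uv_kept: "{u, v} \<in> E - {g0}"
    using uv_edge assms(2) by simp
  have "(adj (E - {g0}))\<^sup>*\<^sup>* p' q'" if "adj (shifted - {shift g0}) p' q'" for p' q'
  proof -
    have "{p', q'} \<in> shift ` E" "{p', q'} \<noteq> shift g0"
      using that by (simp_all add: adj_def shifted_def)
    then obtain g where g: "g \<in> E" "g \<noteq> g0" "{p', q'} = shift g"
      by blast
    show ?thesis
    proof (cases "g = {u, v}")
      case True
      then show ?thesis
        using g uv_kept shift_uv by (intro r_into_rtranclp) (simp add: adj_def)
    next
      case False
      obtain x y where xy: "g = {x, y}"
        using edge_subset_card[OF g(1)] unfolding card_2_iff by blast
      then have "adj (E - {g0}) x y"
        using g by (simp add: adj_def)
      then have "(adj (E - {g0}))\<^sup>*\<^sup>* (merge x) (merge y)"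
        using reachable_merge[OF uv_kept] reachable_sym by (meson r_into_rtranclp rtranclp_trans)
      moreover have "{p', q'} = {merge x, merge y}"
        using g(3) False xy shift_doubleton by simp
      ultimately show ?thesis
        using reachable_sym by (auto simp: doubleton_eq_iff)
    qed
  qed
  then show ?thesis
    using reachable_map[where h = id, OF _ assms(3)] by simp
qed

lemma connected_shifted: "connected_graph V shifted"
  unfolding connected_graph_def
proof (intro conjI ballI)
  show "V \<noteq> {}"
    using connected by (simp add: connected_graph_def)
  fix x y assume "x \<in> V" "y \<in> V"
  then have "(adj (E - {}))\<^sup>*\<^sup>* x y"
    using connected by (simp add: connected_graph_def)
  then have "(adj shifted)\<^sup>*\<^sup>* (merge x) (merge y)"
    using reachable_shifted[of "{}"] by simp
  then show "(adj shifted)\<^sup>*\<^sup>* x y"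
    using reachable_merge[OF uv_shifted] reachable_sym by (meson rtranclp_trans)
qed

lemma cut_edge_shifted_uv: "cut_edge V shifted {u, v}"
proof -
  have "\<not> (adj (shifted - {{u, v}}))\<^sup>*\<^sup>* u v"
  proof
    assume "(adj (shifted - {{u, v}}))\<^sup>*\<^sup>* u v"
    then obtain z where "adj (shifted - {{u, v}}) z v"
      using u_ne_v by (metis rtranclp.cases)
    then have "{z, v} \<in> shift ` E" "{z, v} \<noteq> {u, v}"
      by (simp_all add: adj_def shifted_def)
    then obtain g where "{z, v} = shift g"
      by blast
    then have "g = {u, v}"
      using v_mem_shift_iff by blast
    then show False
      using \<open>{z, v} = shift g\<close> \<open>{z, v} \<noteq> {u, v}\<close> shift_uv by simp
  qed
  then show ?thesis
    using cut_edge_iff_not_reachable[OF simple_shifted connected_shifted uv_shifted] by simp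
qed

lemma cut_edge_shift_iff:
  assumes "g \<in> E"
  shows "cut_edge V shifted (shift g) \<longleftrightarrow> cut_edge V E g"
proof (cases "g = {u, v}")
  case True
  then show ?thesis
    using cut cut_edge_shifted_uv shift_uv by simp
next
  case False
  obtain a b where ab: "g = {a, b}"
    using edge_subset_card[OF assms] unfolding card_2_iff by blast
  then have shift_g: "shift g = {merge a, merge b}"
    using False shift_doubleton by simp
  have "(adj (E - {g}))\<^sup>*\<^sup>* a b \<longleftrightarrow> (adj (shifted - {shift g}))\<^sup>*\<^sup>* (merge a) (merge b)"
  proof
    assume "(adj (E - {g}))\<^sup>*\<^sup>* a b"
    then show "(adj (shifted - {shift g}))\<^sup>*\<^sup>* (merge a) (merge b)"
      using reachable_shifted[of "{g}"] assms by simp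
  next
    assume "(adj (shifted - {shift g}))\<^sup>*\<^sup>* (merge a) (merge b)"
    then have "(adj (E - {g}))\<^sup>*\<^sup>* (merge a) (merge b)"
      using reachable_unshifted assms False by blast
    moreover have "{u, v} \<in> E - {g}"
      using uv_edge False by simp
    ultimately show "(adj (E - {g}))\<^sup>*\<^sup>* a b"
      using reachable_merge reachable_sym by (meson rtranclp_trans)
  qed
  moreover have "shift g \<in> shifted"
    using assms by (simp add: shifted_def)
  ultimately show ?thesis
    using cut_edge_iff_not_reachable[OF simple connected] assms
      cut_edge_iff_not_reachable[OF simple_shifted connected_shifted] ab shift_g
    by simp
qed

lemma card_cut_edges_shifted: "card (cut_edges V shifted) = card (cut_edges V E)"
proof -
  have "cut_edges V shifted = shift ` cut_edges V E"
    using cut_edge_shift_iff by (auto simp: cut_edges_def shifted_def)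
  then show ?thesis
    using inj_on_subset[OF inj_on_shift] by (simp add: card_image cut_edges_def)
qed

lemma edge_sombor_le_shifted:
  assumes "g \<in> E" "g \<noteq> {u, v}"
  shows "edge_sombor E g \<le> edge_sombor shifted (shift g)"
proof -
  obtain a b where ab: "g = {a, b}" "a \<noteq> b"
    using edge_subset_card[OF assms(1)] unfolding card_2_iff by blast
  then have "shift g = {merge a, merge b}" "merge a \<noteq> merge b"
    using assms(2) shift_doubleton merge_eq_iff by simp_all
  then have "edge_sombor shifted (shift g)
      = sqrt (real (degree shifted (merge a))^2 + real (degree shifted (merge b))^2)"
    using edge_sombor_doubleton by simp
  moreover have "edge_sombor E g = sqrt (real (degree E a)^2 + real (degree E b)^2)"
    using ab edge_sombor_doubleton by simp
  moreover have "real (degree E a)^2 + real (degree E b)^2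
      \<le> real (degree shifted (merge a))^2 + real (degree shifted (merge b))^2"
    using degree_le_shifted_merge by (intro add_mono power_mono) simp_all
  ultimately show ?thesis
    by simp
qed

lemma edge_sombor_uv_lt_shifted:
  assumes "degree E u \<ge> 2" "degree E v \<ge> 2"
  shows "edge_sombor E {u, v} < edge_sombor shifted {u, v}"
proof -
  have "real (degree shifted u) = real (degree E u) + real (degree E v) - 1"
    using degree_shifted_u assms by simp
  then show ?thesis
    using sum_squares_lt_merged[of "real (degree E u)" "real (degree E v)"] assms
      degree_shifted_v edge_sombor_doubleton[OF u_ne_v] by simp
qed

lemma sombor_lt_shifted:
  assumes "degree E u \<ge> 2" "degree E v \<ge> 2"
  shows "sombor E < sombor shifted"
proof -
  have "sombor shifted = (\<Sum>g\<in>E. edge_sombor shifted (shift g))"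
    unfolding sombor_eq_sum_edge_sombor shifted_def by (simp add: sum.reindex[OF inj_on_shift])
  moreover have "(\<Sum>g\<in>E. edge_sombor E g) < (\<Sum>g\<in>E. edge_sombor shifted (shift g))"
  proof (rule sum_strict_mono_ex1[OF finite_edges])
    show "\<forall>g\<in>E. edge_sombor E g \<le> edge_sombor shifted (shift g)"
      using edge_sombor_le_shifted edge_sombor_uv_lt_shifted[OF assms] shift_uv
      by (metis less_imp_le)
    show "\<exists>g\<in>E. edge_sombor E g < edge_sombor shifted (shift g)"
      using edge_sombor_uv_lt_shifted[OF assms] shift_uv uv_edge by metis
  qed
  ultimately show ?thesis
    by (simp add: sombor_eq_sum_edge_sombor)
qed

end

lemma non_pendent_cut_edge_not_sombor_maximal:
  assumes "simple_graph V E" "connected_graph V E"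
    and "e \<in> cut_edges V E" "\<not> pendent_edge E e"
  shows "\<exists>E'. simple_graph V E' \<and> connected_graph V E'
    \<and> card (cut_edges V E') = card (cut_edges V E) \<and> sombor E < sombor E'"
proof -
  have "e \<in> E" "cut_edge V E e"
    using assms(3) by (simp_all add: cut_edges_def)
  obtain u v where e: "e = {u, v}"
    using assms(1) \<open>e \<in> E\<close> unfolding simple_graph_def card_2_iff by blast
  interpret cut_edge_shift V E u v
    using assms(1,2) \<open>cut_edge V E e\<close> e by unfold_locales simp_all
  have "degree E u \<ge> 1" "degree E v \<ge> 1"
    using degree_ge_1[OF finite_edges uv_edge] by simp_all
  moreover have "degree E u \<noteq> 1" "degree E v \<noteq> 1"
    using assms(4) e by (auto simp: pendent_edge_def)
  ultimately have "sombor E < sombor shifted"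
    by (intro sombor_lt_shifted) simp_all
  then show ?thesis
    using simple_shifted connected_shifted card_cut_edges_shifted by blast
qed

theorem proposition3p2:
  fixes V :: "'a set" and E :: "'a set set" and n k :: nat
  assumes "simple_graph V E" and "connected_graph V E"
    and "card V = n" and "card (cut_edges V E) = k"
    and "\<forall>(V'::'a set) (E'::'a set set). simple_graph V' E' \<and> connected_graph V' E' \<and> card V' = n
            \<and> card (cut_edges V' E') = k \<longrightarrow> sombor E' \<le> sombor E"
  shows "\<forall>e\<in>cut_edges V E. pendent_edge E e"
proof (rule ballI, rule ccontr)
  fix e assume "e \<in> cut_edges V E" "\<not> pendent_edge E e"
  then obtain E' where "simple_graph V E'" "connected_graph V E'"
      "card (cut_edges V E') = k" "sombor E < sombor E'"
    using non_pendent_cut_edge_not_sombor_maximal assms(1,2,4) by metis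
  then show False
    using assms(3,5) by force
qed

end
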